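(* Let $\star$ be an alternative star product on $C^\infty(\mathbb R^N)[[\alpha]]$. Let $\mu$ be a smooth nowhere-vanishing function on $\mathbb R^N$. Assume that $\star$ is closed with respect to $\mu$, in the following sense: - for all Schwartz functions $f,g$, every coefficient of $f\star g$ is again a Schwartz function; - $\int d^Nx\,\mu\,(f\star g)=\int d^Nx\,\mu\,f\,g$, where the integral is taken coefficientwise in $\alpha$. Then for all Schwartz functions $f,g,h$, $$\int d^Nx\,\mu\,(f\star g)\star h=\int d^Nx\,\mu\,f\star(g\star h).$$ That is, the integrated associator vanishes.
   Context: A star product is a $\mathbb C[[\alpha]]$-bilinear map on $C^\infty(\mathbb R^N)[[\alpha]]$ (formal power series in the parameter $\alpha$). On functions it is given by $f\star g=fg+\sum_{r\ge1}(i\alpha)^rC_r(f,g)$, where the $C_r$ are bilinear bidifferential operators. It is extended $\mathbb C[[\alpha]]$-bilinearly to formal series. The star product is called alternative if $f\star(f\star g)=(f\star f)\star g$ and $f\star(g\star g)=(f\star g)\star g$ for all $f,g$. *)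

theory Defs
  imports "HOL-Analysis.Analysis"
begin

text \<open>Functions on R^N are modelled as functions on the Euclidean space real ^ 'n
  (N = CARD('n)). Formal power series in alpha with function coefficients are modelled
  as their coefficient sequences nat \<Rightarrow> (real ^ 'n \<Rightarrow> complex).\<close>

type_synonym 'n fn = "real ^ 'n \<Rightarrow> complex"
type_synonym 'n fps_fn = "nat \<Rightarrow> 'n fn"

definition partial :: "'n::finite \<Rightarrow> (real ^ 'n \<Rightarrow> 'b::real_normed_vector) \<Rightarrow> real ^ 'n \<Rightarrow> 'b" where
  "partial i f x = vector_derivative (\<lambda>t. f (x + t *\<^sub>R axis i 1)) (at 0)"

fun pd :: "'n::finite list \<Rightarrow> (real ^ 'n \<Rightarrow> 'b::real_normed_vector) \<Rightarrow> real ^ 'n \<Rightarrow> 'b" where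
  "pd [] f = f"
| "pd (i # is) f = partial i (pd is f)"

definition smooth :: "(real ^ 'n::finite \<Rightarrow> 'b::real_normed_vector) \<Rightarrow> bool" where
  "smooth f \<longleftrightarrow> (\<forall>is x. pd is f differentiable (at x))"

definition schwartz :: "'n::finite fn \<Rightarrow> bool" where
  "schwartz f \<longleftrightarrow> smooth f \<and>
     (\<forall>is k. bounded (range (\<lambda>x. norm x ^ k * norm (pd is f x))))"

definition bidifferential :: "('n::finite fn \<Rightarrow> 'n fn \<Rightarrow> 'n fn) \<Rightarrow> bool" where
  "bidifferential C \<longleftrightarrow>
     (\<exists>S c. finite S \<and> (\<forall>p\<in>S. smooth (c p)) \<and>
        (\<forall>f g. smooth f \<longrightarrow> smooth g \<longrightarrow>
           C f g = (\<lambda>x. \<Sum>p\<in>S. c p x * pd (fst p) f x * pd (snd p) g x)))"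

text \<open>The star product determined by the cochains C_r (r \<ge> 1), extended C[[alpha]]-bilinearly:
  f \<star> g = f g + sum_{r \<ge> 1} (i alpha)^r C_r(f,g).  Coefficient n of F \<star> G:\<close>
definition star :: "(nat \<Rightarrow> 'n::finite fn \<Rightarrow> 'n fn \<Rightarrow> 'n fn) \<Rightarrow> 'n fps_fn \<Rightarrow> 'n fps_fn \<Rightarrow> 'n fps_fn" where
  "star C F G n = (\<lambda>x. \<Sum>a\<le>n. \<Sum>b\<le>n - a.
      (if n - a - b = 0 then F a x * G b x
       else \<i> ^ (n - a - b) * C (n - a - b) (F a) (G b) x))"

definition smooth_series :: "'n::finite fps_fn \<Rightarrow> bool" where
  "smooth_series F \<longleftrightarrow> (\<forall>k. smooth (F k))"

definition const_series :: "'n::finite fn \<Rightarrow> 'n fps_fn" where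
  "const_series f = (\<lambda>k. if k = 0 then f else (\<lambda>_. 0))"

definition star_product :: "(nat \<Rightarrow> 'n::finite fn \<Rightarrow> 'n fn \<Rightarrow> 'n fn) \<Rightarrow> bool" where
  "star_product C \<longleftrightarrow> (\<forall>r\<ge>1. bidifferential (C r))"

definition alternative :: "(nat \<Rightarrow> 'n::finite fn \<Rightarrow> 'n fn \<Rightarrow> 'n fn) \<Rightarrow> bool" where
  "alternative C \<longleftrightarrow>
     (\<forall>F G. smooth_series F \<longrightarrow> smooth_series G \<longrightarrow>
        star C F (star C F G) = star C (star C F F) G \<and>
        star C F (star C G G) = star C (star C F G) G)"

definition closed_wrt :: "(nat \<Rightarrow> 'n::finite fn \<Rightarrow> 'n fn \<Rightarrow> 'n fn) \<Rightarrow> (real ^ 'n \<Rightarrow> real) \<Rightarrow> bool" where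
  "closed_wrt C \<mu> \<longleftrightarrow>
     (\<forall>f g. schwartz f \<longrightarrow> schwartz g \<longrightarrow>
        (\<forall>k. schwartz (star C (const_series f) (const_series g) k)) \<and>
        (\<forall>k. integrable (lborel :: (real ^ 'n) measure) (\<lambda>x. complex_of_real (\<mu> x) * star C (const_series f) (const_series g) k x)) \<and>
        (\<forall>k::nat. integrable (lborel :: (real ^ 'n) measure) (\<lambda>x. complex_of_real (\<mu> x) * (if k = 0 then f x * g x else 0))) \<and>
        (\<forall>k. integral\<^sup>L (lborel :: (real ^ 'n) measure) (\<lambda>x. complex_of_real (\<mu> x) * star C (const_series f) (const_series g) k x)
             = integral\<^sup>L lborel (\<lambda>x. complex_of_real (\<mu> x) * (if k = 0 then f x * g x else 0))))"

end

theory Submission imports Defs begin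

text \<open>Polarizing the two alternativity laws shows that the associator is alternating, and hence so is
  its integral \<open>T(f,g,h) = \<integral>\<mu> ((f\<star>g)\<star>h - f\<star>(g\<star>h))\<close>. Closedness lets one move a factor
  across the integral: \<open>\<integral>\<mu> f\<star>(g\<star>h) = \<integral>\<mu> f (g\<star>h) = \<integral>\<mu> (g\<star>h)\<star>f\<close>, so the cyclic sum of
  \<open>T\<close> vanishes. For an alternating form the three cyclic terms agree, whence \<open>3 T = 0\<close>.\<close>

lemma pd_zero: "pd is (\<lambda>_. (0::'b::real_normed_vector)) = (\<lambda>_. 0)"
  by (induction "is") (simp_all add: partial_def)

lemma smooth_zero: "smooth (\<lambda>_. (0::'b::real_normed_vector))"
  unfolding smooth_def pd_zero by simp

lemma differentiable_along_line:
  fixes f :: "real ^ 'n::finite \<Rightarrow> 'b::real_normed_vector"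
  assumes "f differentiable (at x)"
  shows "(\<lambda>t. f (x + t *\<^sub>R v)) differentiable (at 0)"
proof -
  have "(\<lambda>t::real. x + t *\<^sub>R v) differentiable (at 0)" by (intro derivative_intros)
  moreover have "f differentiable (at ((\<lambda>t::real. x + t *\<^sub>R v) 0))" using assms by simp
  ultimately show ?thesis using differentiable_chain_at[of "\<lambda>t::real. x + t *\<^sub>R v" 0 f]
    by (simp add: o_def)
qed

lemma partial_add:
  fixes f g :: "real ^ 'n::finite \<Rightarrow> 'b::real_normed_vector"
  assumes "f differentiable (at x)" "g differentiable (at x)"
  shows "partial i (\<lambda>x. f x + g x) x = partial i f x + partial i g x"
proof -
  have f: "((\<lambda>t. f (x + t *\<^sub>R axis i 1)) has_vector_derivative partial i f x) (at 0)"
    using differentiable_along_line[OF assms(1)] unfolding partial_def vector_derivative_works .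
  have g: "((\<lambda>t. g (x + t *\<^sub>R axis i 1)) has_vector_derivative partial i g x) (at 0)"
    using differentiable_along_line[OF assms(2)] unfolding partial_def vector_derivative_works .
  show ?thesis
    using vector_derivative_at[OF has_vector_derivative_add[OF f g]] by (simp add: partial_def)
qed

lemma pd_add:
  fixes f g :: "real ^ 'n::finite \<Rightarrow> 'b::real_normed_vector"
  assumes "smooth f" "smooth g"
  shows "pd is (\<lambda>x. f x + g x) = (\<lambda>x. pd is f x + pd is g x)"
proof (induction "is")
  case Nil
  then show ?case by simp
next
  case (Cons i js)
  have "pd js f differentiable (at x)" "pd js g differentiable (at x)" for x
    using assms unfolding smooth_def by auto
  then show ?case using partial_add[of "pd js f" _ "pd js g"] by (simp add: Cons fun_eq_iff)
qed

lemma smooth_add: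
  fixes f g :: "real ^ 'n::finite \<Rightarrow> 'b::real_normed_vector"
  assumes "smooth f" "smooth g"
  shows "smooth (\<lambda>x. f x + g x)"
  using assms unfolding smooth_def pd_add[OF assms] by auto

lemma schwartz_imp_smooth: "schwartz f \<Longrightarrow> smooth f"
  unfolding schwartz_def by simp

lemma bidifferential_add_left:
  assumes "bidifferential B" "smooth p" "smooth p'" "smooth q"
  shows "B (\<lambda>x. p x + p' x) q x = B p q x + B p' q x"
proof -
  obtain S c where "\<forall>f g. smooth f \<longrightarrow> smooth g \<longrightarrow>
      B f g = (\<lambda>x. \<Sum>s\<in>S. c s x * pd (fst s) f x * pd (snd s) g x)"
    using assms(1) unfolding bidifferential_def by blast
  then show ?thesis using assms smooth_add[OF assms(2,3)]
    by (simp add: pd_add ring_distribs sum.distrib)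
qed

lemma bidifferential_add_right:
  assumes "bidifferential B" "smooth p" "smooth q" "smooth q'"
  shows "B p (\<lambda>x. q x + q' x) x = B p q x + B p q' x"
proof -
  obtain S c where "\<forall>f g. smooth f \<longrightarrow> smooth g \<longrightarrow>
      B f g = (\<lambda>x. \<Sum>s\<in>S. c s x * pd (fst s) f x * pd (snd s) g x)"
    using assms(1) unfolding bidifferential_def by blast
  then show ?thesis using assms smooth_add[OF assms(3,4)]
    by (simp add: pd_add ring_distribs sum.distrib)
qed

lemma bidifferential_zero_left:
  assumes "bidifferential B" "smooth q"
  shows "B (\<lambda>_. 0) q x = 0"
proof -
  obtain S c where "\<forall>f g. smooth f \<longrightarrow> smooth g \<longrightarrow>
      B f g = (\<lambda>x. \<Sum>s\<in>S. c s x * pd (fst s) f x * pd (snd s) g x)"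
    using assms(1) unfolding bidifferential_def by blast
  then have "B (\<lambda>_. 0) q = (\<lambda>x. \<Sum>s\<in>S. c s x * pd (fst s) (\<lambda>_. 0) x * pd (snd s) q x)"
    using assms(2) smooth_zero by blast
  then show ?thesis by (simp add: pd_zero)
qed

lemma bidifferential_zero_right:
  assumes "bidifferential B" "smooth p"
  shows "B p (\<lambda>_. 0) x = 0"
proof -
  obtain S c where "\<forall>f g. smooth f \<longrightarrow> smooth g \<longrightarrow>
      B f g = (\<lambda>x. \<Sum>s\<in>S. c s x * pd (fst s) f x * pd (snd s) g x)"
    using assms(1) unfolding bidifferential_def by blast
  then have "B p (\<lambda>_. 0) = (\<lambda>x. \<Sum>s\<in>S. c s x * pd (fst s) p x * pd (snd s) (\<lambda>_. 0) x)"
    using assms(2) smooth_zero by blast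
  then show ?thesis by (simp add: pd_zero)
qed

definition series_add :: "'n::finite fps_fn \<Rightarrow> 'n fps_fn \<Rightarrow> 'n fps_fn" where
  "series_add F G = (\<lambda>n x. F n x + G n x)"

lemma const_series_add:
  "const_series (\<lambda>x. f x + g x) = series_add (const_series f) (const_series g)"
  by (auto simp: const_series_def series_add_def fun_eq_iff)

lemma smooth_series_add:
  "smooth_series F \<Longrightarrow> smooth_series G \<Longrightarrow> smooth_series (series_add F G)"
  unfolding smooth_series_def series_add_def by (simp add: smooth_add)

lemma smooth_series_const: "smooth f \<Longrightarrow> smooth_series (const_series f)"
  unfolding smooth_series_def const_series_def by (simp add: smooth_zero)

lemma star_add_left:
  assumes "star_product C" "smooth_series F" "smooth_series F'" "smooth_series G"
  shows "star C (series_add F F') G = series_add (star C F G) (star C F' G)"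
proof (intro ext)
  fix n x
  have "star C (series_add F F') G n x = (\<Sum>a\<le>n. \<Sum>b\<le>n - a.
      (if n - a - b = 0 then F a x * G b x else \<i> ^ (n - a - b) * C (n - a - b) (F a) (G b) x) +
      (if n - a - b = 0 then F' a x * G b x else \<i> ^ (n - a - b) * C (n - a - b) (F' a) (G b) x))"
    unfolding star_def series_add_def
    by (intro sum.cong refl)
      (use assms in \<open>auto simp: star_product_def smooth_series_def bidifferential_add_left ring_distribs\<close>)
  then show "star C (series_add F F') G n x = series_add (star C F G) (star C F' G) n x"
    by (simp add: star_def series_add_def sum.distrib)
qed

lemma star_add_right:
  assumes "star_product C" "smooth_series F" "smooth_series G" "smooth_series G'"
  shows "star C F (series_add G G') = series_add (star C F G) (star C F G')"
proof (intro ext)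
  fix n x
  have "star C F (series_add G G') n x = (\<Sum>a\<le>n. \<Sum>b\<le>n - a.
      (if n - a - b = 0 then F a x * G b x else \<i> ^ (n - a - b) * C (n - a - b) (F a) (G b) x) +
      (if n - a - b = 0 then F a x * G' b x else \<i> ^ (n - a - b) * C (n - a - b) (F a) (G' b) x))"
    unfolding star_def series_add_def
    by (intro sum.cong refl)
      (use assms in \<open>auto simp: star_product_def smooth_series_def bidifferential_add_right ring_distribs\<close>)
  then show "star C F (series_add G G') n x = series_add (star C F G) (star C F G') n x"
    by (simp add: star_def series_add_def sum.distrib)
qed

lemma star_const_series:
  assumes "star_product C" "smooth p" "smooth q"
  shows "star C (const_series p) (const_series q) m x =
    (if m = 0 then p x * q x else \<i> ^ m * C m p q x)" (is "_ = ?v")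
proof -
  have B: "bidifferential (C r)" if "r \<noteq> 0" for r
    using assms(1) that unfolding star_product_def by simp
  have "star C (const_series p) (const_series q) m x =
      (\<Sum>a\<le>m. if a = 0 then (\<Sum>b\<le>m. if b = 0 then ?v else 0) else 0)"
    unfolding star_def
  proof (intro sum.cong refl)
    fix a
    show "(\<Sum>b\<le>m - a. if m - a - b = 0 then const_series p a x * const_series q b x
            else \<i> ^ (m - a - b) * C (m - a - b) (const_series p a) (const_series q b) x) =
          (if a = 0 then \<Sum>b\<le>m. if b = 0 then ?v else 0 else 0)"
    proof (cases "a = 0")
      case True
      show ?thesis unfolding True
        by (simp only: simp_thms(6) if_True diff_zero, intro sum.cong refl)
          (auto simp: const_series_def B bidifferential_zero_right assms)
    qed (auto intro!: sum.neutral simp: const_series_def B bidifferential_zero_left assms smooth_zero)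
  qed
  then show ?thesis by simp
qed

lemma star_const_series_right:
  assumes "star_product C" "smooth_series F" "smooth h"
  shows "star C F (const_series h) k x =
    (\<Sum>a\<le>k. star C (const_series (F a)) (const_series h) (k - a) x)"
  unfolding star_def[of C F]
proof (intro sum.cong refl)
  fix a
  have Fa: "smooth (F a)" using assms(2) unfolding smooth_series_def by blast
  have B: "bidifferential (C r)" if "r \<noteq> 0" for r
    using assms(1) that unfolding star_product_def by simp
  have "(\<Sum>b\<le>k - a. if k - a - b = 0 then F a x * const_series h b x
            else \<i> ^ (k - a - b) * C (k - a - b) (F a) (const_series h b) x) =
        (\<Sum>b\<le>k - a. if b = 0 then (if k - a = 0 then F a x * h x else \<i> ^ (k - a) * C (k - a) (F a) h x) else 0)"
    by (intro sum.cong refl) (auto simp: const_series_def B bidifferential_zero_right Fa)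
  then show "(\<Sum>b\<le>k - a. if k - a - b = 0 then F a x * const_series h b x
            else \<i> ^ (k - a - b) * C (k - a - b) (F a) (const_series h b) x) =
      star C (const_series (F a)) (const_series h) (k - a) x"
    using star_const_series[OF assms(1) Fa assms(3)] by simp
qed

lemma star_const_series_left:
  assumes "star_product C" "smooth_series G" "smooth f"
  shows "star C (const_series f) G k x =
    (\<Sum>b\<le>k. star C (const_series f) (const_series (G b)) (k - b) x)"
proof -
  have Gb: "smooth (G b)" for b using assms(2) unfolding smooth_series_def by blast
  have B: "bidifferential (C r)" if "r \<noteq> 0" for r
    using assms(1) that unfolding star_product_def by simp
  have "star C (const_series f) G k x = (\<Sum>a\<le>k. if a = 0
      then (\<Sum>b\<le>k. star C (const_series f) (const_series (G b)) (k - b) x) else 0)"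
    unfolding star_def[of C "const_series f" G]
  proof (intro sum.cong refl)
    fix a
    show "(\<Sum>b\<le>k - a. if k - a - b = 0 then const_series f a x * G b x
            else \<i> ^ (k - a - b) * C (k - a - b) (const_series f a) (G b) x) =
          (if a = 0 then \<Sum>b\<le>k. star C (const_series f) (const_series (G b)) (k - b) x else 0)"
    proof (cases "a = 0")
      case True
      show ?thesis unfolding True
        by (simp only: simp_thms(6) if_True diff_zero star_const_series[OF assms(1,3) Gb],
            intro sum.cong refl) (auto simp: const_series_def)
    qed (auto intro!: sum.neutral simp: const_series_def B bidifferential_zero_left Gb)
  qed
  then show ?thesis by simp
qed

definition weighted_integral :: "(real ^ 'n::finite \<Rightarrow> real) \<Rightarrow> 'n fn \<Rightarrow> complex" where
  "weighted_integral \<mu> F = integral\<^sup>L lborel (\<lambda>x. complex_of_real (\<mu> x) * F x)"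

lemma weighted_integral_add:
  assumes "integrable lborel (\<lambda>x. complex_of_real (\<mu> x) * F x)"
    and "integrable lborel (\<lambda>x. complex_of_real (\<mu> x) * G x)"
  shows "weighted_integral \<mu> (\<lambda>x. F x + G x) = weighted_integral \<mu> F + weighted_integral \<mu> G"
  using Bochner_Integration.integral_add[OF assms]
  unfolding weighted_integral_def by (simp add: ring_distribs)

locale closed_alternative_star =
  fixes C :: "nat \<Rightarrow> 'n::finite fn \<Rightarrow> 'n fn \<Rightarrow> 'n fn" and \<mu> :: "real ^ 'n \<Rightarrow> real"
  assumes star_product: "star_product C"
    and alternative: "alternative C"
    and closed: "closed_wrt C \<mu>"
begin

abbreviation left_nested :: "'n fn \<Rightarrow> 'n fn \<Rightarrow> 'n fn \<Rightarrow> 'n fps_fn" where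
  "left_nested f g h \<equiv> star C (star C (const_series f) (const_series g)) (const_series h)"

abbreviation right_nested :: "'n fn \<Rightarrow> 'n fn \<Rightarrow> 'n fn \<Rightarrow> 'n fps_fn" where
  "right_nested f g h \<equiv> star C (const_series f) (star C (const_series g) (const_series h))"

definition integrated_associator :: "'n fn \<Rightarrow> 'n fn \<Rightarrow> 'n fn \<Rightarrow> nat \<Rightarrow> complex" where
  "integrated_associator f g h k =
     weighted_integral \<mu> (left_nested f g h k) - weighted_integral \<mu> (right_nested f g h k)"

lemma closedD:
  assumes "schwartz f" "schwartz g"
  shows "schwartz (star C (const_series f) (const_series g) k)"
    and "integrable lborel (\<lambda>x. complex_of_real (\<mu> x) * star C (const_series f) (const_series g) k x)"
    and "weighted_integral \<mu> (star C (const_series f) (const_series g) k)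
           = weighted_integral \<mu> (\<lambda>x. if k = 0 then f x * g x else 0)"
  using closed assms unfolding closed_wrt_def weighted_integral_def by (simp_all add: if_distrib)

lemma smooth_series_star_const:
  "schwartz f \<Longrightarrow> schwartz g \<Longrightarrow> smooth_series (star C (const_series f) (const_series g))"
  unfolding smooth_series_def by (simp add: closedD(1) schwartz_imp_smooth)

lemma weighted_integral_star_const_right:
  assumes F: "\<And>a. schwartz (F a)" and h: "schwartz h"
  shows "integrable lborel (\<lambda>x. complex_of_real (\<mu> x) * star C F (const_series h) k x)"
    and "weighted_integral \<mu> (star C F (const_series h) k) = weighted_integral \<mu> (\<lambda>x. F k x * h x)"
proof -
  have "smooth_series F" using F schwartz_imp_smooth unfolding smooth_series_def by blast
  then have eq: "(\<lambda>x. complex_of_real (\<mu> x) * star C F (const_series h) k x) = (\<lambda>x. \<Sum>a\<le>k.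
      complex_of_real (\<mu> x) * star C (const_series (F a)) (const_series h) (k - a) x)"
    by (simp add: star_const_series_right[OF star_product _ schwartz_imp_smooth[OF h]] sum_distrib_left)
  show "integrable lborel (\<lambda>x. complex_of_real (\<mu> x) * star C F (const_series h) k x)"
    unfolding eq using closedD(2)[OF F h] by auto
  have "weighted_integral \<mu> (star C F (const_series h) k)
      = (\<Sum>a\<le>k. weighted_integral \<mu> (star C (const_series (F a)) (const_series h) (k - a)))"
    unfolding weighted_integral_def eq
    by (rule Bochner_Integration.integral_sum) (rule closedD(2)[OF F h])
  also have "\<dots> = (\<Sum>a\<le>k. if a = k then weighted_integral \<mu> (\<lambda>x. F k x * h x) else 0)"
    by (intro sum.cong refl)
      (auto simp: closedD(3)[OF F h] simp del: diff_is_0_eq; simp add: weighted_integral_def)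
  finally show "weighted_integral \<mu> (star C F (const_series h) k) = weighted_integral \<mu> (\<lambda>x. F k x * h x)"
    by simp
qed

lemma weighted_integral_star_const_left:
  assumes G: "\<And>b. schwartz (G b)" and f: "schwartz f"
  shows "integrable lborel (\<lambda>x. complex_of_real (\<mu> x) * star C (const_series f) G k x)"
    and "weighted_integral \<mu> (star C (const_series f) G k) = weighted_integral \<mu> (\<lambda>x. f x * G k x)"
proof -
  have "smooth_series G" using G schwartz_imp_smooth unfolding smooth_series_def by blast
  then have eq: "(\<lambda>x. complex_of_real (\<mu> x) * star C (const_series f) G k x) = (\<lambda>x. \<Sum>b\<le>k.
      complex_of_real (\<mu> x) * star C (const_series f) (const_series (G b)) (k - b) x)"
    by (simp add: star_const_series_left[OF star_product _ schwartz_imp_smooth[OF f]] sum_distrib_left)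
  show "integrable lborel (\<lambda>x. complex_of_real (\<mu> x) * star C (const_series f) G k x)"
    unfolding eq using closedD(2)[OF f G] by auto
  have "weighted_integral \<mu> (star C (const_series f) G k)
      = (\<Sum>b\<le>k. weighted_integral \<mu> (star C (const_series f) (const_series (G b)) (k - b)))"
    unfolding weighted_integral_def eq
    by (rule Bochner_Integration.integral_sum) (rule closedD(2)[OF f G])
  also have "\<dots> = (\<Sum>b\<le>k. if b = k then weighted_integral \<mu> (\<lambda>x. f x * G k x) else 0)"
    by (intro sum.cong refl)
      (auto simp: closedD(3)[OF f G] simp del: diff_is_0_eq; simp add: weighted_integral_def)
  finally show "weighted_integral \<mu> (star C (const_series f) G k) = weighted_integral \<mu> (\<lambda>x. f x * G k x)"
    by simp
qed

lemma integrable_nested: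
  assumes "schwartz f" "schwartz g" "schwartz h"
  shows "integrable lborel (\<lambda>x. complex_of_real (\<mu> x) * left_nested f g h k x)"
    and "integrable lborel (\<lambda>x. complex_of_real (\<mu> x) * right_nested f g h k x)"
  using weighted_integral_star_const_right(1)[OF closedD(1)[OF assms(1,2)] assms(3)]
    weighted_integral_star_const_left(1)[OF closedD(1)[OF assms(2,3)] assms(1)] .

lemma weighted_integral_right_nested:
  assumes "schwartz f" "schwartz g" "schwartz h"
  shows "weighted_integral \<mu> (right_nested f g h k) = weighted_integral \<mu> (left_nested g h f k)"
  using assms by (simp add: weighted_integral_star_const_left(2) weighted_integral_star_const_right(2)
      closedD(1) mult.commute)

lemma left_alternative_polarized:
  assumes f: "schwartz f" and g: "schwartz g" and h: "schwartz h"
  shows "right_nested f g h k x + right_nested g f h k x = left_nested f g h k x + left_nested g f h k x"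
proof -
  have smooth: "smooth_series (const_series f)" "smooth_series (const_series g)"
      "smooth_series (const_series h)" "smooth_series (const_series (\<lambda>x. f x + g x))"
    by (intro smooth_series_const smooth_add schwartz_imp_smooth f g h)+
  note expand = star_add_left[OF star_product] star_add_right[OF star_product]
    smooth_series_add smooth_series_star_const const_series_add smooth f g h
  have "right_nested (\<lambda>x. f x + g x) (\<lambda>x. f x + g x) h = left_nested (\<lambda>x. f x + g x) (\<lambda>x. f x + g x) h"
    using alternative smooth unfolding alternative_def by blast
  then have "right_nested f f h k x + right_nested f g h k x + (right_nested g f h k x + right_nested g g h k x)
      = left_nested f f h k x + left_nested f g h k x + (left_nested g f h k x + left_nested g g h k x)"
    by (simp only: expand) (simp add: series_add_def add_ac fun_eq_iff)
  moreover have "right_nested f f h = left_nested f f h" "right_nested g g h = left_nested g g h"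
    using alternative smooth unfolding alternative_def by blast+
  ultimately show ?thesis by (simp add: algebra_simps)
qed

lemma right_alternative_polarized:
  assumes f: "schwartz f" and g: "schwartz g" and h: "schwartz h"
  shows "right_nested f g h k x + right_nested f h g k x = left_nested f g h k x + left_nested f h g k x"
proof -
  have smooth: "smooth_series (const_series f)" "smooth_series (const_series g)"
      "smooth_series (const_series h)" "smooth_series (const_series (\<lambda>x. g x + h x))"
    by (intro smooth_series_const smooth_add schwartz_imp_smooth f g h)+
  note expand = star_add_left[OF star_product] star_add_right[OF star_product]
    smooth_series_add smooth_series_star_const const_series_add smooth f g h
  have "right_nested f (\<lambda>x. g x + h x) (\<lambda>x. g x + h x) = left_nested f (\<lambda>x. g x + h x) (\<lambda>x. g x + h x)"
    using alternative smooth unfolding alternative_def by blast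
  then have "right_nested f g g k x + right_nested f g h k x + (right_nested f h g k x + right_nested f h h k x)
      = left_nested f g g k x + left_nested f g h k x + (left_nested f h g k x + left_nested f h h k x)"
    by (simp only: expand) (simp add: series_add_def add_ac fun_eq_iff)
  moreover have "right_nested f g g = left_nested f g g" "right_nested f h h = left_nested f h h"
    using alternative smooth unfolding alternative_def by blast+
  ultimately show ?thesis by (simp add: algebra_simps)
qed

lemma integrated_associator_swap12:
  assumes "schwartz f" "schwartz g" "schwartz h"
  shows "integrated_associator g f h k = - integrated_associator f g h k"
proof -
  have "weighted_integral \<mu> (\<lambda>x. right_nested f g h k x + right_nested g f h k x)
      = weighted_integral \<mu> (\<lambda>x. left_nested f g h k x + left_nested g f h k x)"
    using left_alternative_polarized[OF assms] by simp
  then show ?thesis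
    using assms unfolding integrated_associator_def
    by (simp add: weighted_integral_add integrable_nested algebra_simps)
qed

lemma integrated_associator_swap23:
  assumes "schwartz f" "schwartz g" "schwartz h"
  shows "integrated_associator f h g k = - integrated_associator f g h k"
proof -
  have "weighted_integral \<mu> (\<lambda>x. right_nested f g h k x + right_nested f h g k x)
      = weighted_integral \<mu> (\<lambda>x. left_nested f g h k x + left_nested f h g k x)"
    using right_alternative_polarized[OF assms] by simp
  then show ?thesis
    using assms unfolding integrated_associator_def
    by (simp add: weighted_integral_add integrable_nested algebra_simps)
qed

lemma integrated_associator_cyclic_sum:
  assumes "schwartz f" "schwartz g" "schwartz h"
  shows "integrated_associator f g h k + integrated_associator g h f k + integrated_associator h f g k = 0"
  using assms unfolding integrated_associator_def by (simp add: weighted_integral_right_nested)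

lemma integrated_associator_eq_0:
  assumes f: "schwartz f" and g: "schwartz g" and h: "schwartz h"
  shows "integrated_associator f g h k = 0"
proof -
  have "integrated_associator g h f k = integrated_associator f g h k"
    using integrated_associator_swap23[OF g f h] integrated_associator_swap12[OF f g h] by simp
  moreover have "integrated_associator h f g k = integrated_associator f g h k"
    using integrated_associator_swap12[OF f h g] integrated_associator_swap23[OF f g h] by simp
  ultimately have "3 * integrated_associator f g h k =
      integrated_associator f g h k + integrated_associator g h f k + integrated_associator h f g k"
    by (simp add: algebra_simps)
  then show ?thesis
    using integrated_associator_cyclic_sum[OF f g h, of k] by simp
qed

end

theorem mainTheorem9:
  fixes C :: "nat \<Rightarrow> 'n::finite fn \<Rightarrow> 'n fn \<Rightarrow> 'n fn"
    and \<mu> :: "real ^ 'n \<Rightarrow> real"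
  assumes "star_product C"
    and "alternative C"
    and "smooth \<mu>"
    and "\<forall>x. \<mu> x \<noteq> 0"
    and "closed_wrt C \<mu>"
    and "schwartz f" and "schwartz g" and "schwartz h"
  shows "\<forall>k. integral\<^sup>L lborel (\<lambda>x. complex_of_real (\<mu> x) *
              star C (star C (const_series f) (const_series g)) (const_series h) k x)
            = integral\<^sup>L lborel (\<lambda>x. complex_of_real (\<mu> x) *
              star C (const_series f) (star C (const_series g) (const_series h)) k x)"
proof -
  interpret closed_alternative_star C \<mu>
    using assms(1,2,5) by unfold_locales
  show ?thesis
    using integrated_associator_eq_0[OF assms(6-8)]
    unfolding integrated_associator_def weighted_integral_def by simp
qed

end
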